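(* Let $\mathcal C$ be the UM simplex $(n,k)$ code and consider the nodes of $c_{\rm total}=u_{\rm total}G_{\rm total}$. Then: (1) any erasure pattern with at most $2^{k-1}$ erasures allows for parallel $2$-repair; (2) any erasure pattern with at most $2^k-1$ erasures allows for parallel $3$-repair; (3) any erasure pattern with at most $2^k$ erasures allows for parallel $4$-repair; (4) any erasure pattern with at most $2^k+2^{k-1}-1=d_{free}-1$ erasures allows for parallel $5$-repair.
   Context: Let $k\ge2$ and let $G\in\mathbb F_2^{k\times(2^k-1)}$ be a generator matrix of the binary simplex code (columns are all distinct nonzero vectors of $\mathbb F_2^k$); set $n=2(2^k-1)$. The UM simplex $(n,k)$ code is the binary convolutional code with encoder $G(D)=G_0+G_1D$, $G_0=[G\ G]$, $G_1=[G\ 0]\in\mathbb F_2^{k\times n}$; its free distance is $3\cdot2^{k-1}$. For $u_{\rm total}=(u_0,\dots,u_s)\in\mathbb F_2^{(s+1)k}$, $c_{\rm total}=(c_0,\dots,c_{s+1})=u_{\rm total}G_{\rm total}$, where $G_{\rm total}\in\mathbb F_2^{(s+1)k\times(s+2)n}$ is the block matrix whose $i$-th block row ($i=0,\dots,s$) has $G_0$ in block column $i$, $G_1$ in block column $i+1$ and zeros elsewhere. Nodes are the coordinates of $c_{\rm total}$, corresponding to the columns $g_1,\dots,g_N$ of $G_{\rm total}$. An erasure pattern is a set of erased nodes; the others are live. A node $c_i$ is related to distinct nodes $c_{j_1},\dots,c_{j_\gamma}$ (all different from $c_i$) if $g_i=g_{j_1}+\dots+g_{j_\gamma}$. An erased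 node allows for $r$-repair if it is related to $\gamma\le r$ live nodes. An erasure pattern allows for parallel $r$-repair if each erased node allows for $r$-repair with respect to the original set of live nodes. *)

theory Defs
  imports Main
begin

text \<open>Binary vectors over F_2 are modelled as functions nat => bool (coordinate index to bit).\<close>

definition simplex_gen :: "nat \<Rightarrow> (nat \<Rightarrow> nat \<Rightarrow> bool) \<Rightarrow> bool" where
  "simplex_gen k G \<longleftrightarrow>
     bij_betw G {..<2^k - 1} {v. (\<forall>i. k \<le> i \<longrightarrow> \<not> v i) \<and> (\<exists>i. v i)}"

text \<open>Column t of G_total (t < (s+2)n, n = 2(2^k-1)), as a vector indexed by the
  row index a*k + r (block row a \<le> s, r < k). G0 = [G G], G1 = [G 0].\<close>

definition gtot :: "nat \<Rightarrow> nat \<Rightarrow> (nat \<Rightarrow> nat \<Rightarrow> bool) \<Rightarrow> nat \<Rightarrow> nat \<Rightarrow> bool" where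
  "gtot k s G t row =
     (let m = 2^k - 1; n = 2 * m; b = t div n; c = t mod n; a = row div k; r = row mod k
      in row < (s + 1) * k \<and>
         ((b = a \<and> G (c mod m) r) \<or> (b = a + 1 \<and> c < m \<and> G c r)))"

definition num_nodes :: "nat \<Rightarrow> nat \<Rightarrow> nat" where
  "num_nodes k s = (s + 2) * (2 * (2^k - 1))"

definition related :: "nat \<Rightarrow> nat \<Rightarrow> (nat \<Rightarrow> nat \<Rightarrow> bool) \<Rightarrow> nat \<Rightarrow> nat set \<Rightarrow> bool" where
  "related k s G i J \<longleftrightarrow>
     J \<noteq> {} \<and> J \<subseteq> {..<num_nodes k s} \<and> i \<notin> J \<and>
     (\<forall>row. gtot k s G i row = odd (card {j \<in> J. gtot k s G j row}))"

definition allows_repair :: "nat \<Rightarrow> nat \<Rightarrow> (nat \<Rightarrow> nat \<Rightarrow> bool) \<Rightarrow> nat set \<Rightarrow> nat \<Rightarrow> nat \<Rightarrow> bool" where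
  "allows_repair k s G E r i \<longleftrightarrow>
     (\<exists>J. J \<subseteq> {..<num_nodes k s} - E \<and> card J \<le> r \<and> related k s G i J)"

definition parallel_repair :: "nat \<Rightarrow> nat \<Rightarrow> (nat \<Rightarrow> nat \<Rightarrow> bool) \<Rightarrow> nat set \<Rightarrow> nat \<Rightarrow> bool" where
  "parallel_repair k s G E r \<longleftrightarrow> (\<forall>i \<in> E. allows_repair k s G E r i)"

end

theory Submission
  imports Defs "HOL-Library.Disjoint_Sets"
begin

(* Every node column has the form e_B * g_c: a pattern e_B of block rows times a column g_c of G
   (the nodes nodeB (s + 1) c have the zero column).  For a nonzero node i = e_B * g_c we exhibit,
   for every column w of G, three pairwise disjoint sets of 1, 2 and 4 nodes ("copies" of w at
   levels 0, 1, 2, copy 0 of c being i itself) whose columns sum to e_B * g_w, using neighbouring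
   block columns.  As G is the simplex code, the other columns of G split into 2^(k-1) - 1 pairs
   {w, w'} with g_w + g_w' = g_c.  For each such pair, joining the copy of w at level a with the copy
   of w' at level b, for (a, b) ranging over a partial matching P, and taking the copies of c at the
   levels in X, gives pairwise disjoint sets related to i.  The choices of P and X
   {(0,0)}, {1};  {(0,1),(1,0)}, {1};  {(0,1),(1,0)}, {1,2};  {(0,2),(2,0),(1,1)}, {1,2}
   yield 2^(k-1), 2^k - 1, 2^k and 3 * 2^(k-1) - 1 such sets of sizes at most 2, 3, 4, 5.  Every other
   erased node hits at most one of them, so one of them is live.  A zero node is related to any
   other zero node and to each pair nodeA 0 w, nodeB 0 w. *)

lemma disjoint_family_on_avoids:
  assumes "disjoint_family_on F I" and "finite E" and "card E < card I"
  shows "\<exists>p\<in>I. F p \<inter> E = {}"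
proof (rule ccontr)
  assume "\<not> ?thesis"
  then have "\<forall>p\<in>I. \<exists>x. x \<in> F p \<inter> E" by blast
  then obtain f where f: "\<forall>p\<in>I. f p \<in> F p \<inter> E" by (metis bchoice)
  have "inj_on f I"
  proof (rule inj_onI)
    fix p q assume "p \<in> I" "q \<in> I" "f p = f q"
    then show "p = q" using f assms(1) disjoint_family_onD by fastforce
  qed
  then have "card I \<le> card E"
    using f assms(2) by (intro card_inj_on_le) auto
  then show False using assms(3) by simp
qed

definition odd_count :: "('a \<Rightarrow> bool) \<Rightarrow> 'a set \<Rightarrow> bool" where
  "odd_count P S \<longleftrightarrow> odd (card {x \<in> S. P x})"

lemma odd_count_singleton [simp]: "odd_count P {x} = P x"
proof -
  have "{y \<in> {x}. P y} = (if P x then {x} else {})" by auto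
  then show ?thesis by (simp add: odd_count_def)
qed

lemma odd_count_Un_disjoint:
  assumes "finite S" and "finite T" and "S \<inter> T = {}"
  shows "odd_count P (S \<union> T) \<longleftrightarrow> odd_count P S \<noteq> odd_count P T"
proof -
  have "{x \<in> S \<union> T. P x} = {x \<in> S. P x} \<union> {x \<in> T. P x}" by blast
  also have "card \<dots> = card {x \<in> S. P x} + card {x \<in> T. P x}"
    using assms by (intro card_Un_disjoint) auto
  finally show ?thesis unfolding odd_count_def by simp
qed

lemma odd_count_doubleton:
  assumes "x \<noteq> y"
  shows "odd_count P {x, y} \<longleftrightarrow> P x \<noteq> P y"
proof -
  have "{x, y} = {x} \<union> {y}" by blast
  then show ?thesis using assms odd_count_Un_disjoint[of "{x}" "{y}" P] by simp
qed

lemma card_fixpoint_free_involution: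
  fixes f :: "'a::linorder \<Rightarrow> 'a"
  assumes "finite A" and "\<And>x. x \<in> A \<Longrightarrow> f x \<in> A"
    and "\<And>x. x \<in> A \<Longrightarrow> f x \<noteq> x" and "\<And>x. x \<in> A \<Longrightarrow> f (f x) = x"
  shows "2 * card {x \<in> A. x < f x} = card A"
proof -
  define L where "L = {x \<in> A. x < f x}"
  have "A \<subseteq> L \<union> f ` L"
  proof
    fix x assume x: "x \<in> A"
    show "x \<in> L \<union> f ` L"
    proof (cases "x < f x")
      case True
      then show ?thesis using x by (simp add: L_def)
    next
      case False
      then have "f x < f (f x)" using assms(3,4)[OF x] by simp
      then have "f x \<in> L" using assms(2)[OF x] by (simp add: L_def)
      then have "f (f x) \<in> f ` L" by (rule imageI)
      then show ?thesis using assms(4)[OF x] by simp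
    qed
  qed
  moreover have "L \<union> f ` L \<subseteq> A" using assms(2) by (auto simp: L_def)
  moreover have "L \<inter> f ` L = {}" using assms(4) by (fastforce simp: L_def)
  moreover have "inj_on f L" using assms(4) by (rule inj_on_inverseI) (simp add: L_def)
  moreover have "finite L" using assms(1) by (simp add: L_def)
  ultimately have "card A = card L + card L" by (simp add: card_Un_disjoint card_image)
  then show ?thesis by (simp add: L_def)
qed

lemma disjoint_family_on_UN:
  assumes "disjoint_family_on D Q" and "\<And>p. p \<in> I \<Longrightarrow> K p \<subseteq> Q" and "disjoint_family_on K I"
  shows "disjoint_family_on (\<lambda>p. \<Union>q\<in>K p. D q) I"
  unfolding disjoint_family_on_def
proof (intro ballI impI)
  fix p p' assume p: "p \<in> I" "p' \<in> I" "p \<noteq> p'"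
  have "D q \<inter> D q' = {}" if "q \<in> K p" "q' \<in> K p'" for q q'
  proof -
    have "q \<noteq> q'" using that disjoint_family_onD[OF assms(3) p] by blast
    moreover have "q \<in> Q" "q' \<in> Q" using that assms(2) p(1,2) by blast+
    ultimately show ?thesis using disjoint_family_onD[OF assms(1)] by simp
  qed
  then show "(\<Union>q\<in>K p. D q) \<inter> (\<Union>q\<in>K p'. D q) = {}" by blast
qed

locale um_simplex =
  fixes k s :: nat and G :: "nat \<Rightarrow> nat \<Rightarrow> bool"
  assumes simplex: "simplex_gen k G"
begin

definition m :: nat where "m = 2^k - 1"

lemma two_pow_k: "x < m \<Longrightarrow> (2::nat)^k = 2 * 2^(k - 1)"
  unfolding m_def by (cases k) simp_all

abbreviation col :: "nat \<Rightarrow> nat \<Rightarrow> bool" where "col \<equiv> gtot k s G"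

(* Block column b of G_total consists of the nodes nodeA b x, whose columns stack G_x over G_x,
   followed by the nodes nodeB b x, whose columns stack G_x over 0. *)
definition nodeA :: "nat \<Rightarrow> nat \<Rightarrow> nat" where "nodeA b x = b * (2 * m) + x"
definition nodeB :: "nat \<Rightarrow> nat \<Rightarrow> nat" where "nodeB b x = b * (2 * m) + (m + x)"

lemma block_pos_eq_iff:
  assumes "x < 2 * m" and "x' < 2 * m"
  shows "b * (2 * m) + x = b' * (2 * m) + x' \<longleftrightarrow> b = b' \<and> x = x'"
proof
  assume eq: "b * (2 * m) + x = b' * (2 * m) + x'"
  have "b = (b * (2 * m) + x) div (2 * m)" "x = (b * (2 * m) + x) mod (2 * m)"
    using assms(1) by simp_all
  moreover have "b' = (b' * (2 * m) + x') div (2 * m)" "x' = (b' * (2 * m) + x') mod (2 * m)"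
    using assms(2) by simp_all
  ultimately show "b = b' \<and> x = x'" using eq by metis
qed simp

lemma nodeA_eq_iff [simp]: "x < m \<Longrightarrow> x' < m \<Longrightarrow> nodeA b x = nodeA b' x' \<longleftrightarrow> b = b' \<and> x = x'"
  unfolding nodeA_def by (simp add: block_pos_eq_iff)

lemma nodeB_eq_iff [simp]: "x < m \<Longrightarrow> x' < m \<Longrightarrow> nodeB b x = nodeB b' x' \<longleftrightarrow> b = b' \<and> x = x'"
  unfolding nodeB_def by (simp add: block_pos_eq_iff)

lemma nodeA_neq_nodeB [simp]: "x < m \<Longrightarrow> x' < m \<Longrightarrow> nodeA b x \<noteq> nodeB b' x'" "x < m \<Longrightarrow> x' < m \<Longrightarrow> nodeB b' x' \<noteq> nodeA b x"
  unfolding nodeA_def nodeB_def by (simp_all add: block_pos_eq_iff)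

lemma num_nodes_eq: "num_nodes k s = (s + 2) * (2 * m)"
  by (simp add: num_nodes_def m_def)

lemma block_pos_less_num_nodes: "b \<le> s + 1 \<Longrightarrow> x < 2 * m \<Longrightarrow> b * (2 * m) + x < num_nodes k s"
proof -
  assume "b \<le> s + 1" "x < 2 * m"
  then have "b * (2 * m) + x < (b + 1) * (2 * m)" by simp
  also have "\<dots> \<le> (s + 2) * (2 * m)" using \<open>b \<le> s + 1\<close> by (intro mult_le_mono1) simp
  finally show ?thesis unfolding num_nodes_eq .
qed

lemma nodeA_less [simp]: "b \<le> s + 1 \<Longrightarrow> x < m \<Longrightarrow> nodeA b x < num_nodes k s"
  unfolding nodeA_def by (simp add: block_pos_less_num_nodes)

lemma nodeB_less [simp]: "b \<le> s + 1 \<Longrightarrow> x < m \<Longrightarrow> nodeB b x < num_nodes k s"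
  unfolding nodeB_def by (simp add: block_pos_less_num_nodes)

lemma node_cases:
  assumes "i < num_nodes k s"
  obtains b x where "b \<le> s + 1" "x < m" "i = nodeA b x \<or> i = nodeB b x"
proof -
  define b where "b = i div (2 * m)"
  define y where "y = i mod (2 * m)"
  have i: "i = b * (2 * m) + y" unfolding b_def y_def by (rule div_mult_mod_eq[symmetric])
  have "b < s + 2" using assms unfolding b_def num_nodes_eq by (rule less_mult_imp_div_less)
  moreover have "y < 2 * m"
    using assms unfolding y_def num_nodes_eq by (cases m) simp_all
  ultimately show thesis
    using that[of b y] that[of b "y - m"] i unfolding nodeA_def nodeB_def
    by (cases "y < m") auto
qed

lemma col_block_pos:
  assumes "x < 2 * m"
  shows "col (b * (2 * m) + x) row \<longleftrightarrow> row < (s + 1) * k \<and>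
    ((b = row div k \<and> G (x mod m) (row mod k)) \<or> (b = row div k + 1 \<and> x < m \<and> G x (row mod k)))"
  using assms unfolding gtot_def Let_def m_def[symmetric] by simp

lemma col_nodeA:
  "x < m \<Longrightarrow> col (nodeA b x) row \<longleftrightarrow> row < (s + 1) * k \<and> (row div k = b \<or> row div k + 1 = b) \<and> G x (row mod k)"
  unfolding nodeA_def by (subst col_block_pos) auto

lemma col_nodeB:
  "x < m \<Longrightarrow> col (nodeB b x) row \<longleftrightarrow> row < (s + 1) * k \<and> row div k = b \<and> G x (row mod k)"
  unfolding nodeB_def by (subst col_block_pos) auto

lemma G_bij: "bij_betw G {..<m} {v. (\<forall>i. k \<le> i \<longrightarrow> \<not> v i) \<and> (\<exists>i. v i)}"
  using simplex unfolding simplex_gen_def m_def .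

lemma G_eq_iff: "x < m \<Longrightarrow> y < m \<Longrightarrow> G x = G y \<longleftrightarrow> x = y"
  using bij_betw_imp_inj_on[OF G_bij] by (auto dest: inj_onD)

lemma G_nonzero: "x < m \<Longrightarrow> \<exists>r. G x r"
  using bij_betwE[OF G_bij] by blast

definition partner :: "nat \<Rightarrow> nat \<Rightarrow> nat" where
  "partner c w = inv_into {..<m} G (\<lambda>r. G c r \<noteq> G w r)"

lemma partner:
  assumes "c < m" and "w < m" and "w \<noteq> c"
  shows "partner c w < m" and "G (partner c w) = (\<lambda>r. G c r \<noteq> G w r)"
proof -
  obtain r where "G c r \<noteq> G w r" using G_eq_iff assms by blast
  then have img: "(\<lambda>r. G c r \<noteq> G w r) \<in> G ` {..<m}"
    using bij_betwE[OF G_bij] assms(1,2) unfolding bij_betw_imp_surj_on[OF G_bij] by blast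
  show "partner c w < m" unfolding partner_def using inv_into_into[OF img] by simp
  show "G (partner c w) = (\<lambda>r. G c r \<noteq> G w r)" unfolding partner_def by (rule f_inv_into_f[OF img])
qed

lemma partner_neq:
  assumes "c < m" and "w < m" and "w \<noteq> c"
  shows "partner c w \<noteq> c" and "partner c w \<noteq> w"
proof -
  obtain r where "G w r" using G_nonzero[OF assms(2)] by blast
  then show "partner c w \<noteq> c" using partner(2)[OF assms] by (metis (full_types))
  obtain r' where "G c r'" using G_nonzero[OF assms(1)] by blast
  then show "partner c w \<noteq> w" using partner(2)[OF assms] by (metis (full_types))
qed

lemma partner_partner:
  assumes "c < m" and "w < m" and "w \<noteq> c"
  shows "partner c (partner c w) = w"
proof -
  have "(\<lambda>r. G c r \<noteq> G (partner c w) r) = G w" using partner(2)[OF assms] by auto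
  then show ?thesis using assms(2) bij_betw_imp_inj_on[OF G_bij] unfolding partner_def by simp
qed

definition pair_reps :: "nat \<Rightarrow> nat set" where
  "pair_reps c = {w. w < m \<and> w \<noteq> c \<and> w < partner c w}"

lemma pair_repsD:
  assumes "c < m" and "w \<in> pair_reps c"
  shows "w < m" "w \<noteq> c" "partner c w < m" "partner c w \<noteq> c" "partner c w \<noteq> w"
proof -
  show w: "w < m" "w \<noteq> c" using assms(2) by (simp_all add: pair_reps_def)
  show "partner c w < m" "partner c w \<noteq> c" "partner c w \<noteq> w"
    using partner(1) partner_neq assms(1) w by simp_all
qed

lemma card_pair_reps:
  assumes "c < m"
  shows "card (pair_reps c) = 2^(k - 1) - 1"
proof -
  have "pair_reps c = {w \<in> {..<m} - {c}. w < partner c w}" by (auto simp: pair_reps_def)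
  also have "2 * card \<dots> = card ({..<m} - {c})"
    by (rule card_fixpoint_free_involution) (use assms partner(1) partner_neq partner_partner in auto)
  finally have "2 * card (pair_reps c) = m - 1" using assms by simp
  then show ?thesis using two_pow_k[OF assms] unfolding m_def by arith
qed

lemma pair_reps_disjoint:
  assumes "c < m" and "w \<in> pair_reps c" and "w' \<in> pair_reps c" and "w \<noteq> w'"
  shows "{w, partner c w} \<inter> {w', partner c w'} = {}"
proof -
  have w: "w < m" "w \<noteq> c" "w < partner c w" and w': "w' < m" "w' \<noteq> c" "w' < partner c w'"
    using assms(2,3) by (simp_all add: pair_reps_def)
  have "w \<noteq> partner c w'" "partner c w \<noteq> w'"
    using partner_partner[OF assms(1)] w w' by fastforce+
  moreover have "partner c w \<noteq> partner c w'"
    using partner_partner[OF assms(1)] w w' assms(4) by metis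
  ultimately show ?thesis using assms(4) by auto
qed

lemma col_nodeB_last: "x < m \<Longrightarrow> \<not> col (nodeB (s + 1) x) row"
  using less_mult_imp_div_less[of row "s + 1" k] by (auto simp: col_nodeB)

lemma col_nodeA_first: "x < m \<Longrightarrow> col (nodeA 0 x) = col (nodeB 0 x)"
  by (simp add: fun_eq_iff col_nodeA col_nodeB)

lemma col_nodeA_last:
  assumes "x < m"
  shows "col (nodeA (s + 1) x) = col (nodeB s x)"
proof
  fix row
  have "row < (s + 1) * k \<Longrightarrow> row div k < s + 1" by (rule less_mult_imp_div_less)
  then show "col (nodeA (s + 1) x) row = col (nodeB s x) row"
    using assms by (auto simp: col_nodeA col_nodeB)
qed

lemma col_nodeA_Suc: "x < m \<Longrightarrow> col (nodeA (Suc b) x) row \<longleftrightarrow> col (nodeB (Suc b) x) row \<noteq> col (nodeB b x) row"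
  by (auto simp: col_nodeA col_nodeB)

definition sums_to :: "nat set \<Rightarrow> nat \<Rightarrow> bool" where
  "sums_to J i \<longleftrightarrow> (\<forall>row. odd_count (\<lambda>j. col j row) J = col i row)"

lemma sums_to_singleton [simp]: "sums_to {j} i \<longleftrightarrow> col j = col i"
  by (simp add: sums_to_def fun_eq_iff)

lemma sums_to_doubleton:
  "x \<noteq> y \<Longrightarrow> sums_to {x, y} i \<longleftrightarrow> (\<forall>row. col i row \<longleftrightarrow> col x row \<noteq> col y row)"
  by (auto simp: sums_to_def odd_count_doubleton)

lemma sums_to_Un:
  assumes "finite S" and "finite T" and "S \<inter> T = {}" and "sums_to S x" and "sums_to T y"
    and "\<And>row. col i row \<longleftrightarrow> col x row \<noteq> col y row"
  shows "sums_to (S \<union> T) i"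
  using assms by (simp add: sums_to_def odd_count_Un_disjoint)

lemma allows_repair_mono:
  assumes "allows_repair k s G E r i" and "r \<le> r'"
  shows "allows_repair k s G E r' i"
proof -
  obtain J where "J \<subseteq> {..<num_nodes k s} - E" "card J \<le> r" "related k s G i J"
    using assms(1) unfolding allows_repair_def by blast
  then show ?thesis unfolding allows_repair_def using assms(2) by (intro exI[of _ J]) simp
qed

lemma allows_repair_by_pigeonhole:
  assumes E: "E \<subseteq> {..<num_nodes k s}" "i \<in> E" and card: "card E \<le> card I"
    and disj: "disjoint_family_on F I"
    and F: "\<And>p. p \<in> I \<Longrightarrow> F p \<noteq> {} \<and> F p \<subseteq> {..<num_nodes k s} \<and> i \<notin> F p \<and>
                         card (F p) \<le> r \<and> sums_to (F p) i"
  shows "allows_repair k s G E r i"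
proof -
  have "finite E" using E(1) finite_subset by blast
  moreover have "card (E - {i}) < card I"
  proof -
    have "0 < card E" using E(2) \<open>finite E\<close> card_gt_0_iff by blast
    then show ?thesis using E(2) \<open>finite E\<close> card by simp
  qed
  ultimately obtain p where p: "p \<in> I" "F p \<inter> (E - {i}) = {}"
    using disjoint_family_on_avoids[OF disj] by blast
  then have "F p \<subseteq> {..<num_nodes k s} - E" using F[OF p(1)] by blast
  moreover have "related k s G i (F p)"
    using F[OF p(1)] unfolding related_def sums_to_def odd_count_def by simp
  ultimately show ?thesis
    using F[OF p(1)] unfolding allows_repair_def by blast
qed

definition additive :: "(nat \<Rightarrow> nat) \<Rightarrow> bool" where
  "additive \<nu> \<longleftrightarrow> (\<forall>c<m. \<forall>w<m. w \<noteq> c \<longrightarrow>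
     (\<forall>row. col (\<nu> c) row \<longleftrightarrow> col (\<nu> w) row \<noteq> col (\<nu> (partner c w)) row))"

lemma additive_nodeA: "additive (nodeA b)"
  unfolding additive_def
proof (intro allI impI)
  fix c w row assume "c < m" "w < m" "w \<noteq> c"
  then show "col (nodeA b c) row \<longleftrightarrow> col (nodeA b w) row \<noteq> col (nodeA b (partner c w)) row"
    using partner[of c w] by (simp add: col_nodeA) blast
qed

lemma additive_nodeB: "additive (nodeB b)"
  unfolding additive_def
proof (intro allI impI)
  fix c w row assume "c < m" "w < m" "w \<noteq> c"
  then show "col (nodeB b c) row \<longleftrightarrow> col (nodeB b w) row \<noteq> col (nodeB b (partner c w)) row"
    using partner[of c w] by (simp add: col_nodeB) blast
qed

definition copy_system :: "(nat \<Rightarrow> nat) \<Rightarrow> (nat \<Rightarrow> nat \<Rightarrow> nat set) \<Rightarrow> bool" where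
  "copy_system \<nu> C \<longleftrightarrow>
     (\<forall>w<m. C 0 w = {\<nu> w}) \<and>
     (\<forall>j<3. \<forall>w<m. C j w \<noteq> {} \<and> C j w \<subseteq> {..<num_nodes k s} \<and> card (C j w) \<le> 2^j \<and>
                  sums_to (C j w) (\<nu> w)) \<and>
     disjoint_family_on (\<lambda>(j, w). C j w) ({..<3} \<times> {..<m})"

(* Candidate repair sets as sets of copy indices (j, w): Inl (w, a, b) joins copy a of w with
   copy b of partner c w, and Inr x is copy x of c. *)
definition repair_index :: "nat \<Rightarrow> (nat \<times> nat \<times> nat) + nat \<Rightarrow> (nat \<times> nat) set" where
  "repair_index c = case_sum (\<lambda>(w, a, b). {(a, w), (b, partner c w)}) (\<lambda>x. {(x, c)})"

lemma partner_pairs_disjoint: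
  assumes c: "c < m" and P: "inj_on fst P" "inj_on snd P"
    and t: "w \<in> pair_reps c" "(a, b) \<in> P" and t': "w' \<in> pair_reps c" "(a', b') \<in> P"
    and ne: "(w, a, b) \<noteq> (w', a', b')"
  shows "{(a, w), (b, partner c w)} \<inter> {(a', w'), (b', partner c w')} = {}"
proof (cases "w = w'")
  case True
  then have "(a, b) \<noteq> (a', b')" using ne by simp
  then have "a \<noteq> a'" "b \<noteq> b'"
    using inj_onD[OF P(1) _ t(2) t'(2)] inj_onD[OF P(2) _ t(2) t'(2)] by auto
  then show ?thesis using True pair_repsD(5)[OF c t(1)] by auto
next
  case False
  then show ?thesis using pair_reps_disjoint[OF c t(1) t'(1)] by auto
qed

lemma repair_index_disjoint:
  assumes c: "c < m" and P: "inj_on fst P" "inj_on snd P"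
  shows "disjoint_family_on (repair_index c) ((pair_reps c \<times> P) <+> X)"
  unfolding disjoint_family_on_def
proof (intro ballI impI)
  fix p p' assume p: "p \<in> (pair_reps c \<times> P) <+> X" "p' \<in> (pair_reps c \<times> P) <+> X" "p \<noteq> p'"
  have off_c: "(x, c) \<notin> repair_index c (Inl t)" if "t \<in> pair_reps c \<times> P" for x t
    using that pair_repsD(2,4)[OF c] by (fastforce simp: repair_index_def)
  show "repair_index c p \<inter> repair_index c p' = {}"
  proof (cases p; cases p')
    fix t t' assume tt: "p = Inl t" "p' = Inl t'"
    obtain w a b w' a' b' where wab: "t = (w, a, b)" "t' = (w', a', b')" by (cases t, cases t')
    have "w \<in> pair_reps c" "(a, b) \<in> P" "w' \<in> pair_reps c" "(a', b') \<in> P"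
      using p(1,2) tt wab by auto
    moreover have "(w, a, b) \<noteq> (w', a', b')" using p(3) tt wab by simp
    ultimately have "{(a, w), (b, partner c w)} \<inter> {(a', w'), (b', partner c w')} = {}"
      by (rule partner_pairs_disjoint[OF c P])
    then show ?thesis using tt wab by (simp add: repair_index_def)
  next
    fix t x' assume "p = Inl t" "p' = Inr x'"
    then show ?thesis using p(1) off_c[of t x'] by (auto simp: repair_index_def)
  next
    fix x t' assume "p = Inr x" "p' = Inl t'"
    then show ?thesis using p(2) off_c[of t' x] by (auto simp: repair_index_def)
  next
    fix x x' assume "p = Inr x" "p' = Inr x'"
    then show ?thesis using p(3) by (simp add: repair_index_def)
  qed
qed

lemma copy_systemD:
  assumes "copy_system \<nu> C" and "j < 3" and "w < m"
  shows "C j w \<noteq> {}" "C j w \<subseteq> {..<num_nodes k s}" "finite (C j w)" "card (C j w) \<le> 2^j"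
    "sums_to (C j w) (\<nu> w)"
proof -
  show "C j w \<noteq> {}" "C j w \<subseteq> {..<num_nodes k s}" "card (C j w) \<le> 2^j" "sums_to (C j w) (\<nu> w)"
    using assms unfolding copy_system_def by blast+
  then show "finite (C j w)" using finite_subset by blast
qed

lemma copy_system_disjoint:
  assumes "copy_system \<nu> C" and "j < 3" "w < m" "j' < 3" "w' < m" and "(j, w) \<noteq> (j', w')"
  shows "C j w \<inter> C j' w' = {}"
proof -
  have "disjoint_family_on (\<lambda>(j, w). C j w) ({..<3} \<times> {..<m})"
    using assms(1) unfolding copy_system_def by blast
  from disjoint_family_onD[OF this, of "(j, w)" "(j', w')"] show ?thesis using assms(2-6) by simp
qed

lemma repair_index_bounds:
  assumes "c < m" and "P \<subseteq> {..<3} \<times> {..<3}" and "X \<subseteq> {1, 2}" and "p \<in> (pair_reps c \<times> P) <+> X"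
  shows "repair_index c p \<subseteq> {..<3} \<times> {..<m}" and "(0, c) \<notin> repair_index c p"
  using assms pair_repsD[OF assms(1)] by (fastforce simp: repair_index_def)+

definition repair_set :: "(nat \<Rightarrow> nat \<Rightarrow> nat set) \<Rightarrow> nat \<Rightarrow> (nat \<times> nat \<times> nat) + nat \<Rightarrow> nat set" where
  "repair_set C c p = (\<Union>(j, w)\<in>repair_index c p. C j w)"

lemma repair_set_disjoint:
  assumes "copy_system \<nu> C" and "c < m"
    and "P \<subseteq> {..<3} \<times> {..<3}" and "inj_on fst P" and "inj_on snd P" and "X \<subseteq> {1, 2}"
  shows "disjoint_family_on (repair_set C c) ((pair_reps c \<times> P) <+> X)"
  unfolding repair_set_def
proof (rule disjoint_family_on_UN)
  show "disjoint_family_on (\<lambda>(j, w). C j w) ({..<3} \<times> {..<m})"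
    using assms(1) unfolding copy_system_def by blast
qed (use assms repair_index_disjoint repair_index_bounds in auto)

lemma not_in_repair_set:
  assumes cs: "copy_system \<nu> C" and "c < m"
    and "P \<subseteq> {..<3} \<times> {..<3}" and "X \<subseteq> {1, 2}" and p: "p \<in> (pair_reps c \<times> P) <+> X"
  shows "\<nu> c \<notin> repair_set C c p"
proof
  assume "\<nu> c \<in> repair_set C c p"
  then obtain j w where jw: "(j, w) \<in> repair_index c p" "\<nu> c \<in> C j w" by (auto simp: repair_set_def)
  have "(j, w) \<in> {..<3} \<times> {..<m}" "(j, w) \<noteq> (0, c)"
    using repair_index_bounds[OF assms(2-5)] jw(1) by auto
  then have "C j w \<inter> C 0 c = {}"
    using copy_system_disjoint[OF cs _ _ _ \<open>c < m\<close>, of j w 0] by auto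
  moreover have "C 0 c = {\<nu> c}" using cs \<open>c < m\<close> unfolding copy_system_def by blast
  ultimately show False using jw(2) by blast
qed

lemma repair_set_repairs:
  assumes add: "additive \<nu>" and cs: "copy_system \<nu> C" and c: "c < m"
    and P: "P \<subseteq> {..<3} \<times> {..<3}" "\<And>a b. (a, b) \<in> P \<Longrightarrow> 2^a + 2^b \<le> r"
    and X: "X \<subseteq> {1, 2}" "\<And>x. x \<in> X \<Longrightarrow> 2^x \<le> r"
    and p: "p \<in> (pair_reps c \<times> P) <+> X"
  shows "repair_set C c p \<noteq> {} \<and> repair_set C c p \<subseteq> {..<num_nodes k s} \<and>
    card (repair_set C c p) \<le> r \<and> sums_to (repair_set C c p) (\<nu> c)"
proof (cases p)
  case (Inl t)
  then obtain w a b where t: "p = Inl (w, a, b)" "w \<in> pair_reps c" "(a, b) \<in> P"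
    using p by (cases t) auto
  define u where "u = partner c w"
  note w = pair_repsD[OF c t(2), folded u_def]
  have ab: "a < 3" "b < 3" using P(1) t(3) by auto
  note Ca = copy_systemD[OF cs ab(1) w(1)] and Cb = copy_systemD[OF cs ab(2) w(3)]
  have set: "repair_set C c p = C a w \<union> C b u"
    by (simp add: t(1) u_def repair_set_def repair_index_def)
  have "C a w \<inter> C b u = {}"
    using copy_system_disjoint[OF cs ab(1) w(1) ab(2) w(3)] w(5) by simp
  moreover have "col (\<nu> c) row \<longleftrightarrow> col (\<nu> w) row \<noteq> col (\<nu> u) row" for row
    using add c w(1,2) unfolding additive_def u_def by blast
  ultimately have "sums_to (C a w \<union> C b u) (\<nu> c)"
    using sums_to_Un[OF Ca(3) Cb(3)] Ca(5) Cb(5) by blast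
  moreover have "card (C a w \<union> C b u) \<le> r"
    using card_Un_le[of "C a w" "C b u"] Ca(4) Cb(4) P(2)[OF t(3)] by linarith
  ultimately show ?thesis unfolding set using Ca Cb by blast
next
  case (Inr x)
  then have x: "x \<in> X" "x < 3" using p X(1) by auto
  have "repair_set C c p = C x c" by (simp add: Inr repair_set_def repair_index_def)
  then show ?thesis using copy_systemD[OF cs x(2) c] X(2)[OF x(1)] by simp
qed

lemma allows_repair_from_copies:
  assumes add: "additive \<nu>" and cs: "copy_system \<nu> C" and c: "c < m"
    and E: "E \<subseteq> {..<num_nodes k s}" "\<nu> c \<in> E"
    and P: "P \<subseteq> {..<3} \<times> {..<3}" "inj_on fst P" "inj_on snd P" "\<And>a b. (a, b) \<in> P \<Longrightarrow> 2^a + 2^b \<le> r"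
    and X: "X \<subseteq> {1, 2}" "\<And>x. x \<in> X \<Longrightarrow> 2^x \<le> r"
    and card: "card E \<le> card P * (2^(k - 1) - 1) + card X"
  shows "allows_repair k s G E r (\<nu> c)"
proof (rule allows_repair_by_pigeonhole[OF E _ repair_set_disjoint[OF cs c P(1-3) X(1)]])
  have "finite (pair_reps c)" by (simp add: pair_reps_def)
  moreover have "finite P" using P(1) finite_subset by blast
  moreover have "finite X" using X(1) finite_subset by blast
  ultimately show "card E \<le> card ((pair_reps c \<times> P) <+> X)"
    using card by (simp add: card_Plus card_cartesian_product card_pair_reps[OF c] mult.commute)
qed (use repair_set_repairs[OF add cs c P(1,4) X] not_in_repair_set[OF cs c P(1) X(1)] in blast)

definition repair_bounds :: "nat set \<Rightarrow> nat \<Rightarrow> bool" where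
  "repair_bounds E i \<longleftrightarrow>
     (card E \<le> 2^(k - 1) \<longrightarrow> allows_repair k s G E 2 i) \<and>
     (card E \<le> 2^k - 1 \<longrightarrow> allows_repair k s G E 3 i) \<and>
     (card E \<le> 2^k \<longrightarrow> allows_repair k s G E 4 i) \<and>
     (card E \<le> 2^k + 2^(k - 1) - 1 \<longrightarrow> allows_repair k s G E 5 i)"

lemma repair_bounds_from_copy_system:
  assumes "additive \<nu>" and "copy_system \<nu> C" and c: "c < m"
    and "E \<subseteq> {..<num_nodes k s}" and "\<nu> c \<in> E"
  shows "repair_bounds E (\<nu> c)"
proof -
  note from_copies = allows_repair_from_copies[OF assms]
  have h: "(2::nat)^k = 2 * 2^(k - 1)" "1 \<le> (2::nat)^(k - 1)" using two_pow_k[OF c] by simp_all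
  show ?thesis
    unfolding repair_bounds_def
  proof (intro conjI impI)
    assume "card E \<le> 2^(k - 1)"
    then show "allows_repair k s G E 2 (\<nu> c)"
      by (intro from_copies[where P = "{(0, 0)}" and X = "{1}"]) auto
  next
    assume "card E \<le> 2^k - 1"
    then show "allows_repair k s G E 3 (\<nu> c)"
      using h by (intro from_copies[where P = "{(0, 1), (1, 0)}" and X = "{1}"]) auto
  next
    assume "card E \<le> 2^k"
    then show "allows_repair k s G E 4 (\<nu> c)"
      using h by (intro from_copies[where P = "{(0, 1), (1, 0)}" and X = "{1, 2}"]) auto
  next
    assume "card E \<le> 2^k + 2^(k - 1) - 1"
    then show "allows_repair k s G E 5 (\<nu> c)"
      using h by (intro from_copies[where P = "{(0, 2), (2, 0), (1, 1)}" and X = "{1, 2}"]) auto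
  qed
qed

definition above :: "nat \<Rightarrow> nat \<Rightarrow> nat set" where
  "above b w = {nodeA (Suc b) w, nodeB (Suc b) w}"

definition below :: "nat \<Rightarrow> nat \<Rightarrow> nat set" where
  "below b w = (case b of 0 \<Rightarrow> {nodeA 0 w} | Suc b' \<Rightarrow> {nodeA b w, nodeB b' w})"

lemma above_copy:
  assumes "b \<le> s" and "w < m"
  shows "above b w \<noteq> {}" "above b w \<subseteq> {..<num_nodes k s}" "card (above b w) \<le> 2"
    "sums_to (above b w) (nodeB b w)"
proof -
  show "above b w \<noteq> {}" "above b w \<subseteq> {..<num_nodes k s}" "card (above b w) \<le> 2"
    using assms by (simp_all add: above_def card_insert_le_m1)
  show "sums_to (above b w) (nodeB b w)"
    using assms(2) by (auto simp: above_def sums_to_doubleton col_nodeA col_nodeB)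
qed

lemma below_copy:
  assumes "b \<le> s + 1" and "w < m"
  shows "below b w \<noteq> {}" "below b w \<subseteq> {..<num_nodes k s}" "card (below b w) \<le> 2"
    "sums_to (below b w) (nodeB b w)"
proof -
  have "below b w \<noteq> {} \<and> below b w \<subseteq> {..<num_nodes k s} \<and> card (below b w) \<le> 2 \<and>
        sums_to (below b w) (nodeB b w)"
  proof (cases b)
    case 0
    then show ?thesis using assms col_nodeA_first by (simp add: below_def)
  next
    case (Suc b')
    then show ?thesis
      using assms by (auto simp: below_def sums_to_doubleton col_nodeA col_nodeB card_insert_le_m1)
  qed
  then show "below b w \<noteq> {}" "below b w \<subseteq> {..<num_nodes k s}" "card (below b w) \<le> 2"
    "sums_to (below b w) (nodeB b w)" by blast+
qed

lemma copy_systemI: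
  assumes "\<And>w. w < m \<Longrightarrow> \<nu> w < num_nodes k s"
    and "\<And>w. w < m \<Longrightarrow> S1 w \<noteq> {} \<and> S1 w \<subseteq> {..<num_nodes k s} \<and> card (S1 w) \<le> 2 \<and> sums_to (S1 w) (\<nu> w)"
    and "\<And>w. w < m \<Longrightarrow> S2 w \<noteq> {} \<and> S2 w \<subseteq> {..<num_nodes k s} \<and> card (S2 w) \<le> 4 \<and> sums_to (S2 w) (\<nu> w)"
    and "disjoint_family_on (\<lambda>(j, w). [{\<nu> w}, S1 w, S2 w] ! j) ({..<3} \<times> {..<m})"
  shows "copy_system \<nu> (\<lambda>j w. [{\<nu> w}, S1 w, S2 w] ! j)"
  unfolding copy_system_def
proof (intro conjI)
  show "\<forall>j<3. \<forall>w<m. [{\<nu> w}, S1 w, S2 w] ! j \<noteq> {} \<and> [{\<nu> w}, S1 w, S2 w] ! j \<subseteq> {..<num_nodes k s} \<and>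
      card ([{\<nu> w}, S1 w, S2 w] ! j) \<le> 2^j \<and> sums_to ([{\<nu> w}, S1 w, S2 w] ! j) (\<nu> w)"
  proof (intro allI impI)
    fix j w :: nat assume "j < 3" "w < m"
    then consider "j = 0" | "j = 1" | "j = 2" by linarith
    then show "[{\<nu> w}, S1 w, S2 w] ! j \<noteq> {} \<and> [{\<nu> w}, S1 w, S2 w] ! j \<subseteq> {..<num_nodes k s} \<and>
      card ([{\<nu> w}, S1 w, S2 w] ! j) \<le> 2^j \<and> sums_to ([{\<nu> w}, S1 w, S2 w] ! j) (\<nu> w)"
      using assms(1-3)[OF \<open>w < m\<close>] by cases simp_all
  qed
qed (simp_all add: assms(4))

lemma copy_system_nodeB:
  assumes "b \<le> s"
  shows "copy_system (nodeB b) (\<lambda>j w. [{nodeB b w}, above b w, below b w] ! j)"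
proof (rule copy_systemI)
  show "disjoint_family_on (\<lambda>(j, w). [{nodeB b w}, above b w, below b w] ! j) ({..<3} \<times> {..<m})"
    unfolding disjoint_family_on_def
    by (auto simp: less_Suc_eq numeral_3_eq_3 above_def below_def split: nat.splits)
qed (use assms above_copy below_copy in \<open>auto intro: le_trans[where j = 2]\<close>)

lemma copy_system_nodeA_first:
  "copy_system (nodeA 0) (\<lambda>j w. [{nodeA 0 w}, {nodeB 0 w}, above 0 w] ! j)"
proof (rule copy_systemI)
  show "disjoint_family_on (\<lambda>(j, w). [{nodeA 0 w}, {nodeB 0 w}, above 0 w] ! j) ({..<3} \<times> {..<m})"
    unfolding disjoint_family_on_def by (auto simp: less_Suc_eq numeral_3_eq_3 above_def)
qed (use above_copy[of 0] col_nodeA_first in \<open>auto simp: sums_to_def intro: le_trans[where j = 2]\<close>)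

lemma copy_system_nodeA_last:
  "copy_system (nodeA (s + 1)) (\<lambda>j w. [{nodeA (s + 1) w}, {nodeB s w}, below s w] ! j)"
proof (rule copy_systemI)
  show "disjoint_family_on (\<lambda>(j, w). [{nodeA (s + 1) w}, {nodeB s w}, below s w] ! j) ({..<3} \<times> {..<m})"
    unfolding disjoint_family_on_def
    by (auto simp: less_Suc_eq numeral_3_eq_3 below_def split: nat.splits)
qed (use below_copy[of s] col_nodeA_last in \<open>auto simp: sums_to_def intro: le_trans[where j = 2]\<close>)

lemma copy_system_nodeA_Suc:
  assumes "b < s"
  shows "copy_system (nodeA (Suc b))
    (\<lambda>j w. [{nodeA (Suc b) w}, {nodeB (Suc b) w, nodeB b w}, above (Suc b) w \<union> below b w] ! j)"
proof (rule copy_systemI)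
  fix w assume w: "w < m"
  show "nodeA (Suc b) w < num_nodes k s" using assms w by simp
  show "{nodeB (Suc b) w, nodeB b w} \<noteq> {} \<and> {nodeB (Suc b) w, nodeB b w} \<subseteq> {..<num_nodes k s} \<and>
      card {nodeB (Suc b) w, nodeB b w} \<le> 2 \<and> sums_to {nodeB (Suc b) w, nodeB b w} (nodeA (Suc b) w)"
    using assms w col_nodeA_Suc by (simp add: sums_to_doubleton card_insert_le_m1)
  have disj: "above (Suc b) w \<inter> below b w = {}"
    using w by (auto simp: above_def below_def split: nat.splits)
  have "sums_to (above (Suc b) w \<union> below b w) (nodeA (Suc b) w)"
    using sums_to_Un[OF _ _ disj] above_copy[of "Suc b" w] below_copy[of b w] assms w col_nodeA_Suc
    by (simp add: above_def below_def split: nat.splits)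
  moreover have "card (above (Suc b) w \<union> below b w) \<le> 4"
    using card_Un_le[of "above (Suc b) w" "below b w"] above_copy[of "Suc b" w] below_copy[of b w] assms w
    by simp
  ultimately show "above (Suc b) w \<union> below b w \<noteq> {} \<and> above (Suc b) w \<union> below b w \<subseteq> {..<num_nodes k s} \<and>
      card (above (Suc b) w \<union> below b w) \<le> 4 \<and> sums_to (above (Suc b) w \<union> below b w) (nodeA (Suc b) w)"
    using above_copy[of "Suc b" w] below_copy[of b w] assms w by simp
next
  show "disjoint_family_on (\<lambda>(j, w). [{nodeA (Suc b) w}, {nodeB (Suc b) w, nodeB b w},
      above (Suc b) w \<union> below b w] ! j) ({..<3} \<times> {..<m})"
    unfolding disjoint_family_on_def
    by (auto simp: less_Suc_eq numeral_3_eq_3 above_def below_def split: nat.splits)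
qed

lemma allows_repair_zero_node:
  assumes c: "c < m" and E: "E \<subseteq> {..<num_nodes k s}" "nodeB (s + 1) c \<in> E"
    and card: "card E \<le> 2 * m - 1"
  shows "allows_repair k s G E 2 (nodeB (s + 1) c)"
proof (rule allows_repair_by_pigeonhole[OF E])
  let ?I = "({..<m} - {c}) <+> {..<m}"
  let ?F = "case_sum (\<lambda>w. {nodeB (s + 1) w}) (\<lambda>w. {nodeA 0 w, nodeB 0 w})"
  show "card E \<le> card ?I" using card c by (simp add: card_Plus)
  show "disjoint_family_on ?F ?I" by (auto simp: disjoint_family_on_def)
  fix p assume "p \<in> ?I"
  then show "?F p \<noteq> {} \<and> ?F p \<subseteq> {..<num_nodes k s} \<and> nodeB (s + 1) c \<notin> ?F p \<and> card (?F p) \<le> 2 \<and>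
      sums_to (?F p) (nodeB (s + 1) c)"
    using c col_nodeB_last col_nodeA_first
    by (auto simp: sums_to_doubleton card_insert_le_m1 fun_eq_iff)
qed

lemma repair_bounds_zero_node:
  assumes "2 \<le> k" and "c < m" and "E \<subseteq> {..<num_nodes k s}" and "nodeB (s + 1) c \<in> E"
  shows "repair_bounds E (nodeB (s + 1) c)"
proof -
  have h: "(2::nat) \<le> 2^(k - 1)" "(2::nat)^k = 2 * 2^(k - 1)" "m = 2^k - 1"
    using assms(1) two_pow_k[OF assms(2)] by (simp_all add: self_le_power m_def)
  have zero: "allows_repair k s G E r (nodeB (s + 1) c)" if "card E \<le> 2 * m - 1" "2 \<le> r" for r
    using allows_repair_mono[OF allows_repair_zero_node[OF assms(2-4) that(1)] that(2)] .
  show ?thesis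
    unfolding repair_bounds_def by (intro conjI impI zero) (use h in linarith)+
qed

lemma repair_bounds_node:
  assumes "2 \<le> k" and E: "E \<subseteq> {..<num_nodes k s}" and "i \<in> E"
  shows "repair_bounds E i"
proof -
  obtain b x where bx: "b \<le> s + 1" "x < m" "i = nodeA b x \<or> i = nodeB b x"
    using node_cases assms(2,3) by blast
  show ?thesis
  proof (cases "i = nodeB b x")
    case True
    show ?thesis
    proof (cases "b = s + 1")
      case False
      with bx True assms show ?thesis
        using repair_bounds_from_copy_system[OF additive_nodeB copy_system_nodeB] by simp
    qed (use True bx assms repair_bounds_zero_node in simp)
  next
    case False
    then have i: "i = nodeA b x" using bx by simp
    consider "b = 0" | "b = s + 1" | b' where "b = Suc b'" "b' < s" using bx(1) by (cases b) (auto simp: le_less)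
    then show ?thesis
    proof cases
      case 1
      then show ?thesis using i bx assms
        repair_bounds_from_copy_system[OF additive_nodeA copy_system_nodeA_first] by simp
    next
      case 2
      then show ?thesis using i bx assms
        repair_bounds_from_copy_system[OF additive_nodeA copy_system_nodeA_last] by simp
    next
      case 3
      then show ?thesis using i bx assms
        repair_bounds_from_copy_system[OF additive_nodeA copy_system_nodeA_Suc] by simp
    qed
  qed
qed

end

theorem theorem5p4:
  fixes k s :: nat and G :: "nat \<Rightarrow> nat \<Rightarrow> bool"
  assumes "k \<ge> 2" and "simplex_gen k G"
  shows "\<forall>E. E \<subseteq> {..<num_nodes k s} \<longrightarrow>
           (card E \<le> 2^(k-1) \<longrightarrow> parallel_repair k s G E 2) \<and>
           (card E \<le> 2^k - 1 \<longrightarrow> parallel_repair k s G E 3) \<and>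
           (card E \<le> 2^k \<longrightarrow> parallel_repair k s G E 4) \<and>
           (card E \<le> 2^k + 2^(k-1) - 1 \<longrightarrow> parallel_repair k s G E 5)"
proof -
  interpret um_simplex k s G using assms(2) by unfold_locales
  show ?thesis
    using repair_bounds_node[OF assms(1)] unfolding parallel_repair_def repair_bounds_def by blast
qed

end
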